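(* With $\ell_K:=\inf_{W\in M_K}\mathcal{L}_K(W)$ for $K\in(0,\infty]$, one has $\limsup_{K\to\infty}\ell_K\le\ell_\infty$.
   Context: Fix $p>2$, $1<q<p$, $\sigma^2>0$. For $K\in(0,\infty)$, $I_K=(-K,K]$ with functions identified with $2K$-periodic functions on $\mathbb{R}$; $I_\infty=\mathbb{R}$; $\|\cdot\|_{r,I_K}$ is the $L^r$ norm over $I_K$. $(\mathcal{A}W)(\varphi)=\int_{\varphi-1/2}^{\varphi+1/2}W(s)\,ds$. $X_K=\{W\in L^2(I_K):\mathcal{A}W\in L^q(I_K)\cap L^p(I_K)\}$, $\mathcal{Q}_K(W)=\int_{I_K}|\mathcal{A}W|^q$, $\mathcal{P}_K(W)=\int_{I_K}|\mathcal{A}W|^p$, $\mathcal{L}_K(W)=\tfrac12\sigma^2\|W\|_{2,I_K}^2+\mathcal{Q}_K(W)-\mathcal{P}_K(W)$, $\mathcal{F}_K(W)=\sigma^2\|W\|_{2,I_K}^2+q\mathcal{Q}_K(W)-p\mathcal{P}_K(W)$, $M_K=\{W\in X_K:W\ne0,\ \mathcal{F}_K(W)=0\}$. *)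

theory Defs
  imports "HOL-Analysis.Analysis"
begin

text \<open>K ranges over (0,\<infinity>]; we use extended reals, K = \<infinity> meaning the whole line.
  I_K = (-K,K] for finite K, I_\<infinity> = the real line.\<close>
definition I_set :: "ereal \<Rightarrow> real set" where
  "I_set K = (case K of ereal k \<Rightarrow> {-k<..k} | _ \<Rightarrow> UNIV)"

text \<open>For finite K, functions are identified with 2K-periodic functions on the line.\<close>
definition periodic_fun :: "ereal \<Rightarrow> (real \<Rightarrow> real) \<Rightarrow> bool" where
  "periodic_fun K W = (\<forall>k. K = ereal k \<longrightarrow> (\<forall>x. W (x + 2 * k) = W x))"

definition avg :: "(real \<Rightarrow> real) \<Rightarrow> real \<Rightarrow> real" where
  "avg W \<phi> = (LINT s:{\<phi> - 1/2..\<phi> + 1/2}|lborel. W s)"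

definition in_Lr :: "real \<Rightarrow> real set \<Rightarrow> (real \<Rightarrow> real) \<Rightarrow> bool" where
  "in_Lr r I f = (f \<in> borel_measurable borel \<and> set_integrable lborel I (\<lambda>x. \<bar>f x\<bar> powr r))"

definition Lr_pow :: "real \<Rightarrow> real set \<Rightarrow> (real \<Rightarrow> real) \<Rightarrow> real" where
  "Lr_pow r I f = (LINT x:I|lborel. \<bar>f x\<bar> powr r)"

definition X_space :: "real \<Rightarrow> real \<Rightarrow> ereal \<Rightarrow> (real \<Rightarrow> real) set" where
  "X_space p q K = {W. periodic_fun K W \<and> in_Lr 2 (I_set K) W
      \<and> in_Lr q (I_set K) (avg W) \<and> in_Lr p (I_set K) (avg W)}"

definition Q_fun :: "real \<Rightarrow> ereal \<Rightarrow> (real \<Rightarrow> real) \<Rightarrow> real" where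
  "Q_fun q K W = Lr_pow q (I_set K) (avg W)"

definition P_fun :: "real \<Rightarrow> ereal \<Rightarrow> (real \<Rightarrow> real) \<Rightarrow> real" where
  "P_fun p K W = Lr_pow p (I_set K) (avg W)"

definition L_fun :: "real \<Rightarrow> real \<Rightarrow> real \<Rightarrow> ereal \<Rightarrow> (real \<Rightarrow> real) \<Rightarrow> real" where
  "L_fun p q sig2 K W = 1/2 * sig2 * Lr_pow 2 (I_set K) W + Q_fun q K W - P_fun p K W"

definition F_fun :: "real \<Rightarrow> real \<Rightarrow> real \<Rightarrow> ereal \<Rightarrow> (real \<Rightarrow> real) \<Rightarrow> real" where
  "F_fun p q sig2 K W = sig2 * Lr_pow 2 (I_set K) W + q * Q_fun q K W - p * P_fun p K W"

text \<open>Nehari-type set M_K; W \<noteq> 0 means W is nonzero in L^2(I_K), i.e. its L^2 norm is nonzero.\<close>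
definition M_set :: "real \<Rightarrow> real \<Rightarrow> real \<Rightarrow> ereal \<Rightarrow> (real \<Rightarrow> real) set" where
  "M_set p q sig2 K = {W \<in> X_space p q K. Lr_pow 2 (I_set K) W \<noteq> 0 \<and> F_fun p q sig2 K W = 0}"

definition ell :: "real \<Rightarrow> real \<Rightarrow> real \<Rightarrow> ereal \<Rightarrow> ereal" where
  "ell p q sig2 K = (INF W \<in> M_set p q sig2 K. ereal (L_fun p q sig2 K W))"

end

theory Submission
  imports Defs
begin

text \<open>
  Fix W in M_\<infinity> and \<epsilon> > 0. Cutting W off outside [-n, n] changes the three integrals
  \<sigma>^2 \<parallel>W\<parallel>^2, Q and P only slightly for large n; since F vanishes at W and the fibre
  t \<mapsto> F(tW) changes sign at t = 1, the intermediate value theorem gives a factor t close to 1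
  putting t\<cdot>(cut-off of W) back onto M_\<infinity>, with energy below L_\<infinity>(W) + \<epsilon>. A function on M_\<infinity>
  vanishing for |x| \<ge> K - 1/2 extends 2K-periodically to an element of M_K with the same
  energy, because the averaging window has half-width 1/2. Hence ell_K \<le> L_\<infinity>(W) + \<epsilon>
  for all large K.
\<close>

section \<open>Integrals over I_K and the averaging operator\<close>

lemma I_set_simps [simp]: "I_set (ereal k) = {-k<..k}" "I_set \<infinity> = UNIV"
  by (auto simp: I_set_def)

lemma Lr_pow_nonneg: "0 \<le> Lr_pow r I f"
  unfolding Lr_pow_def set_lebesgue_integral_def
  by (rule integral_nonneg_AE) (auto simp: indicator_def)

lemma Lr_pow_UNIV: "Lr_pow r UNIV f = (\<integral>x. \<bar>f x\<bar> powr r \<partial>lborel)"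
  by (simp add: Lr_pow_def set_lebesgue_integral_def)

lemma in_Lr_UNIV:
  "in_Lr r UNIV f \<longleftrightarrow> f \<in> borel_measurable borel \<and> integrable lborel (\<lambda>x. \<bar>f x\<bar> powr r)"
  by (simp add: in_Lr_def set_integrable_def)

lemma indicator_scaleR_powr_eq:
  fixes f g :: "real \<Rightarrow> real" and r :: real
  assumes "\<And>x. x \<in> I \<Longrightarrow> f x = g x" and "\<And>x. x \<notin> I \<Longrightarrow> g x = 0"
  shows "(\<lambda>x. indicator I x *\<^sub>R \<bar>f x\<bar> powr r) = (\<lambda>x. \<bar>g x\<bar> powr r)"
  using assms by (auto simp: fun_eq_iff indicator_def)

lemma Lr_pow_eq_Lr_pow_UNIV:
  assumes "\<And>x. x \<in> I \<Longrightarrow> f x = g x" and "\<And>x. x \<notin> I \<Longrightarrow> g x = 0"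
  shows "Lr_pow r I f = Lr_pow r UNIV g"
  unfolding Lr_pow_def set_lebesgue_integral_def
  by (subst indicator_scaleR_powr_eq[OF assms]) simp_all

lemma in_Lr_if_in_Lr_UNIV:
  assumes "\<And>x. x \<in> I \<Longrightarrow> f x = g x" and "\<And>x. x \<notin> I \<Longrightarrow> g x = 0"
    and "f \<in> borel_measurable borel" and "in_Lr r UNIV g"
  shows "in_Lr r I f"
  unfolding in_Lr_def set_integrable_def
  by (subst indicator_scaleR_powr_eq[OF assms(1,2)]) (use assms(3,4) in \<open>simp_all add: in_Lr_UNIV\<close>)

lemma Lr_pow_cmult: "0 < t \<Longrightarrow> Lr_pow r I (\<lambda>x. t * f x) = t powr r * Lr_pow r I f"
  by (simp add: Lr_pow_def set_integral_mult_right abs_mult powr_mult)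

lemma in_Lr_cmult:
  assumes "0 < t" and "in_Lr r I f"
  shows "in_Lr r I (\<lambda>x. t * f x)"
proof -
  have "f \<in> borel_measurable borel"
    using assms(2) by (simp add: in_Lr_def)
  then have "(\<lambda>x. t * f x) \<in> borel_measurable borel"
    by measurable
  then show ?thesis
    using assms by (simp add: in_Lr_def set_integrable_mult_right abs_mult powr_mult)
qed

lemma avg_cong:
  assumes "\<And>s. s \<in> {\<phi> - 1/2..\<phi> + 1/2} \<Longrightarrow> V s = W s"
  shows "avg V \<phi> = avg W \<phi>"
  unfolding avg_def by (rule set_lebesgue_integral_cong) (auto simp: assms)

lemma avg_eq_0:
  assumes "\<And>s. s \<in> {\<phi> - 1/2..\<phi> + 1/2} \<Longrightarrow> W s = 0"
  shows "avg W \<phi> = 0"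
  using avg_cong[of \<phi> W "\<lambda>_. 0"] assms by (simp add: avg_def)

lemma avg_cmult: "avg (\<lambda>x. t * W x) = (\<lambda>\<phi>. t * avg W \<phi>)"
  by (simp add: avg_def set_integral_mult_right fun_eq_iff)

lemma avg_measurable:
  assumes "W \<in> borel_measurable borel"
  shows "avg W \<in> borel_measurable borel"
proof -
  have "(\<lambda>(\<phi>, s). indicator {\<phi> - 1/2..\<phi> + 1/2} s *\<^sub>R W s) =
      (\<lambda>x. (if fst x - 1/2 \<le> snd x \<and> snd x \<le> fst x + 1/2 then 1 else 0) * W (snd x))"
    by (auto simp: fun_eq_iff indicator_def)
  also have "\<dots> \<in> borel_measurable (borel \<Otimes>\<^sub>M lborel)"
    using assms by measurable
  finally have "(\<lambda>\<phi>. \<integral>s. indicator {\<phi> - 1/2..\<phi> + 1/2} s *\<^sub>R W s \<partial>lborel) \<in> borel_measurable borel"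
    by (rule lborel.borel_measurable_lebesgue_integral)
  then show ?thesis
    by (simp add: avg_def[abs_def] set_lebesgue_integral_def)
qed

lemma abs_avg_le_am_gm:
  fixes V g :: "real \<Rightarrow> real"
  assumes "V \<in> borel_measurable borel" and "integrable lborel g" and "\<And>s. 0 \<le> g s"
    and "\<And>s. s \<in> {\<phi> - 1/2..\<phi> + 1/2} \<Longrightarrow> (V s)\<^sup>2 \<le> g s" and "0 < e"
  shows "\<bar>avg V \<phi>\<bar> \<le> e / 2 + (\<integral>s. g s \<partial>lborel) / (2 * e)"
proof -
  define J where "J = {\<phi> - 1/2..\<phi> + 1/2}"
  define h where "h s = e / 2 * indicator J s + g s / (2 * e)" for s
  have J: "integrable lborel (indicator J :: real \<Rightarrow> real)"
    unfolding J_def by (rule integrable_real_indicator) auto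
  have h: "integrable lborel h"
    unfolding h_def using assms(2) J by (intro Bochner_Integration.integrable_add integrable_divide integrable_mult_right)
  have bound: "\<bar>indicator J s * V s\<bar> \<le> h s" for s
  proof (cases "s \<in> J")
    case True
    have "0 \<le> (\<bar>V s\<bar> - e)\<^sup>2"
      by simp
    then have "\<bar>V s\<bar> \<le> e / 2 + (V s)\<^sup>2 / (2 * e)"
      using assms(5) by (simp add: field_simps power2_eq_square)
    also have "\<dots> \<le> e / 2 + g s / (2 * e)"
      using assms(4,5) True unfolding J_def by (simp add: divide_right_mono)
    finally show ?thesis
      using True by (simp add: h_def)
  next
    case False
    then show ?thesis
      using assms(3,5) by (simp add: h_def)
  qed
  have "(\<lambda>s. indicator J s * V s) \<in> borel_measurable lborel"
    using assms(1) unfolding J_def by measurable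
  then have VJ: "integrable lborel (\<lambda>s. indicator J s * V s)"
    using bound by (intro Bochner_Integration.integrable_bound[OF h]) (auto intro: order_trans[OF _ abs_ge_self])
  have "\<bar>avg V \<phi>\<bar> = \<bar>\<integral>s. indicator J s * V s \<partial>lborel\<bar>"
    by (simp add: avg_def set_lebesgue_integral_def J_def)
  also have "\<dots> \<le> (\<integral>s. \<bar>indicator J s * V s\<bar> \<partial>lborel)"
    using integral_norm_bound[of lborel "\<lambda>s. indicator J s * V s"] by simp
  also have "\<dots> \<le> (\<integral>s. h s \<partial>lborel)"
    using VJ h bound by (intro Bochner_Integration.integral_mono) auto
  also have "\<dots> = e / 2 + (\<integral>s. g s \<partial>lborel) / (2 * e)"
    unfolding h_def using assms(2) J by (simp add: J_def)
  finally show ?thesis .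
qed

text \<open>Cauchy-Schwarz on the window of length 1, from the AM-GM bound with e the square root
  of the integral of g.\<close>

lemma abs_avg_le_sqrt:
  fixes V g :: "real \<Rightarrow> real"
  assumes "V \<in> borel_measurable borel" and "integrable lborel g" and "\<And>s. 0 \<le> g s"
    and "\<And>s. s \<in> {\<phi> - 1/2..\<phi> + 1/2} \<Longrightarrow> (V s)\<^sup>2 \<le> g s"
  shows "\<bar>avg V \<phi>\<bar> \<le> sqrt (\<integral>s. g s \<partial>lborel)"
proof -
  define G where "G = (\<integral>s. g s \<partial>lborel)"
  have am_gm: "\<bar>avg V \<phi>\<bar> \<le> e / 2 + G / (2 * e)" if "0 < e" for e
    unfolding G_def using abs_avg_le_am_gm[OF assms that] .
  have "0 \<le> G"
    unfolding G_def using assms(3) by simp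
  then consider "G = 0" | "0 < G"
    by linarith
  then show ?thesis
  proof cases
    case 1
    have "\<bar>avg V \<phi>\<bar> \<le> 0 + e" if "0 < e" for e
      using am_gm[of "2 * e"] that 1 by simp
    then have "\<bar>avg V \<phi>\<bar> \<le> 0"
      by (rule field_le_epsilon)
    then show ?thesis
      using 1 unfolding G_def[symmetric] by simp
  next
    case 2
    have "G / (2 * sqrt G) = sqrt G / 2"
      using real_div_sqrt[of G] 2 by simp
    then show ?thesis
      using am_gm[of "sqrt G"] 2 unfolding G_def[symmetric] by simp
  qed
qed

lemma X_space_cmult:
  assumes "0 < t" and "W \<in> X_space p q K"
  shows "(\<lambda>x. t * W x) \<in> X_space p q K"
  using assms by (simp add: X_space_def periodic_fun_def avg_cmult in_Lr_cmult)

section \<open>The fibres t \<mapsto> L(tW) and t \<mapsto> F(tW)\<close>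

definition fibre_energy :: "real \<Rightarrow> real \<Rightarrow> real \<Rightarrow> real \<Rightarrow> real \<Rightarrow> real \<Rightarrow> real" where
  "fibre_energy p q a b c t = t powr 2 * a / 2 + t powr q * b - t powr p * c"

definition fibre_nehari :: "real \<Rightarrow> real \<Rightarrow> real \<Rightarrow> real \<Rightarrow> real \<Rightarrow> real \<Rightarrow> real" where
  "fibre_nehari p q a b c t = t powr 2 * a + q * (t powr q * b) - p * (t powr p * c)"

lemma L_fun_cmult:
  "0 < t \<Longrightarrow> L_fun p q s K (\<lambda>x. t * W x) =
     fibre_energy p q (s * Lr_pow 2 (I_set K) W) (Q_fun q K W) (P_fun p K W) t"
  by (simp add: L_fun_def Q_fun_def P_fun_def fibre_energy_def avg_cmult Lr_pow_cmult)

lemma F_fun_cmult: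
  "0 < t \<Longrightarrow> F_fun p q s K (\<lambda>x. t * W x) =
     fibre_nehari p q (s * Lr_pow 2 (I_set K) W) (Q_fun q K W) (P_fun p K W) t"
  by (simp add: F_fun_def Q_fun_def P_fun_def fibre_nehari_def avg_cmult Lr_pow_cmult)

lemma cmult_in_M_set:
  assumes "W \<in> X_space p q K" and "Lr_pow 2 (I_set K) W \<noteq> 0" and "0 < t"
    and "fibre_nehari p q (s * Lr_pow 2 (I_set K) W) (Q_fun q K W) (P_fun p K W) t = 0"
  shows "(\<lambda>x. t * W x) \<in> M_set p q s K"
  using assms by (simp add: M_set_def X_space_cmult F_fun_cmult Lr_pow_cmult)

lemma fibre_nehari_sign:
  assumes "2 < p" "0 \<le> q" "q < p" "0 < a" "0 \<le> b" "fibre_nehari p q a b c 1 = 0" "0 < t"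
  shows "t < 1 \<Longrightarrow> 0 < fibre_nehari p q a b c t"
    and "1 < t \<Longrightarrow> fibre_nehari p q a b c t < 0"
proof -
  have balance: "a + q * b = p * c"
    using assms(6) by (simp add: fibre_nehari_def)
  then have "0 < p * c"
    using assms(4) mult_nonneg_nonneg[OF assms(2,5)] by linarith
  then have "0 < c"
    using assms(1) by (simp add: zero_less_mult_iff)
  define m where "m = max 2 q"
  have m: "2 \<le> m" "q \<le> m" "m < p"
    using assms(1,3) by (auto simp: m_def)
  have split_p: "t powr p = t powr m * t powr (p - m)"
    by (simp flip: powr_add)
  have "t powr m * (a + q * b - p * c) = 0"
    using balance by simp
  show "0 < fibre_nehari p q a b c t" if "t < 1"
  proof -
    have "t powr m * a \<le> t powr 2 * a"
      using powr_mono'[of 2 m t] m that assms(4,7) by simp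
    moreover have "q * (t powr m * b) \<le> q * (t powr q * b)"
      using powr_mono'[of q m t] m that assms(2,5,7) by (simp add: mult_left_mono mult_right_mono)
    moreover have "t powr p < t powr m"
      using split_p powr01_less_one[of t "p - m"] m that assms(7) by simp
    then have "p * (t powr p * c) < p * (t powr m * c)"
      using assms(1) \<open>0 < c\<close> by simp
    ultimately show ?thesis
      using \<open>t powr m * (a + q * b - p * c) = 0\<close> by (simp add: fibre_nehari_def algebra_simps)
  qed
  show "fibre_nehari p q a b c t < 0" if "1 < t"
  proof -
    have "t powr 2 * a \<le> t powr m * a"
      using powr_mono[of 2 m t] m that assms(4) by simp
    moreover have "q * (t powr q * b) \<le> q * (t powr m * b)"
      using powr_mono[of q m t] m that assms(2,5) by (simp add: mult_left_mono mult_right_mono)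
    moreover have "p * (t powr m * c) < p * (t powr p * c)"
      using m that assms(1) \<open>0 < c\<close> by simp
    ultimately show ?thesis
      using \<open>t powr m * (a + q * b - p * c) = 0\<close> by (simp add: fibre_nehari_def algebra_simps)
  qed
qed

lemma fibre_energy_le_on_interval:
  assumes "0 \<le> q" "0 \<le> p" "0 \<le> a" "0 \<le> b" "0 \<le> c" "d \<le> 1" "1 - d \<le> t" "t \<le> 1 + d"
  shows "fibre_energy p q a b c t \<le> (1 + d) powr 2 * a / 2 + (1 + d) powr q * b - (1 - d) powr p * c"
proof -
  have "t powr 2 * a \<le> (1 + d) powr 2 * a" "t powr q * b \<le> (1 + d) powr q * b"
    "(1 - d) powr p * c \<le> t powr p * c"
    using assms by (auto intro!: mult_right_mono powr_mono2)
  then show ?thesis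
    unfolding fibre_energy_def by linarith
qed

lemma fibre_nehari_root_between:
  assumes "0 < d" "d < 1"
    and "0 < fibre_nehari p q a b c (1 - d)" "fibre_nehari p q a b c (1 + d) < 0"
  shows "\<exists>t. 1 - d \<le> t \<and> t \<le> 1 + d \<and> fibre_nehari p q a b c t = 0"
proof -
  have "continuous_on {1 - d..1 + d} (fibre_nehari p q a b c)"
    unfolding fibre_nehari_def using assms(2) by (auto intro!: continuous_intros)
  then show ?thesis
    using IVT2'[of "fibre_nehari p q a b c" "1 + d" 0 "1 - d"] assms by fastforce
qed

text \<open>The energy bound is first made uniform on an interval [1 - d, 1 + d] on whose
  endpoints the limit fibre has opposite signs; for large n the same holds for the n-th fibre.\<close>

lemma eventually_fibre_nehari_root:
  fixes an bn cn :: "nat \<Rightarrow> real"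
  assumes "2 < p" "0 \<le> q" "q < p" "0 < a" "0 \<le> b" "fibre_nehari p q a b c 1 = 0"
    and "an \<longlonglongrightarrow> a" "bn \<longlonglongrightarrow> b" "cn \<longlonglongrightarrow> c"
    and "\<And>n. 0 \<le> an n" "\<And>n. 0 \<le> bn n" "\<And>n. 0 \<le> cn n" and "0 < e"
  shows "\<forall>\<^sub>F n in sequentially. \<exists>t>0. fibre_nehari p q (an n) (bn n) (cn n) t = 0 \<and>
           fibre_energy p q (an n) (bn n) (cn n) t < fibre_energy p q a b c 1 + e"
proof -
  define E where "E = fibre_energy p q a b c 1 + e"
  define bound where
    "bound x y z d = (1 + d) powr 2 * x / 2 + (1 + d) powr q * y - (1 - d) powr p * z"
    for x y z d :: real
  have "((\<lambda>d. bound a b c d) \<longlongrightarrow> bound a b c 0) (at_right 0)"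
    unfolding bound_def by (intro tendsto_intros) auto
  moreover have "bound a b c 0 < E"
    using assms(13) by (simp add: bound_def E_def fibre_energy_def)
  ultimately have "\<forall>\<^sub>F d in at_right 0. bound a b c d < E"
    by (rule order_tendstoD(2))
  moreover have "\<forall>\<^sub>F d in at_right (0::real). 0 < d \<and> d < 1"
    by (simp add: eventually_at_right_field) (auto intro: exI[of _ 1])
  ultimately obtain d where d: "0 < d" "d < 1" "bound a b c d < E"
    using eventually_happens[OF eventually_conj] trivial_limit_at_right_real by blast
  have "0 < fibre_nehari p q a b c (1 - d)" "fibre_nehari p q a b c (1 + d) < 0"
    using fibre_nehari_sign[OF assms(1-6)] d by auto
  moreover have "(\<lambda>n. fibre_nehari p q (an n) (bn n) (cn n) t) \<longlonglongrightarrow> fibre_nehari p q a b c t" for t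
    unfolding fibre_nehari_def using assms(7-9) by (intro tendsto_intros)
  moreover have "(\<lambda>n. bound (an n) (bn n) (cn n) d) \<longlonglongrightarrow> bound a b c d"
    unfolding bound_def using assms(7-9) by (intro tendsto_intros) auto
  ultimately have "\<forall>\<^sub>F n in sequentially. 0 < fibre_nehari p q (an n) (bn n) (cn n) (1 - d) \<and>
      fibre_nehari p q (an n) (bn n) (cn n) (1 + d) < 0 \<and> bound (an n) (bn n) (cn n) d < E"
    using d(3) by (intro eventually_conj order_tendstoD(1) order_tendstoD(2))
  then show ?thesis
  proof (rule eventually_mono)
    fix n
    assume n: "0 < fibre_nehari p q (an n) (bn n) (cn n) (1 - d) \<and>
      fibre_nehari p q (an n) (bn n) (cn n) (1 + d) < 0 \<and> bound (an n) (bn n) (cn n) d < E"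
    then obtain t where t: "1 - d \<le> t" "t \<le> 1 + d" "fibre_nehari p q (an n) (bn n) (cn n) t = 0"
      using fibre_nehari_root_between[OF d(1,2)] by blast
    have "fibre_energy p q (an n) (bn n) (cn n) t \<le> bound (an n) (bn n) (cn n) d"
      unfolding bound_def using t d assms(1,2,10-12) by (intro fibre_energy_le_on_interval) auto
    then have "fibre_energy p q (an n) (bn n) (cn n) t < E"
      using n by linarith
    then show "\<exists>t>0. fibre_nehari p q (an n) (bn n) (cn n) t = 0 \<and>
        fibre_energy p q (an n) (bn n) (cn n) t < fibre_energy p q a b c 1 + e"
      using t d unfolding E_def by (intro exI[of _ t]) auto
  qed
qed

section \<open>Periodic extension\<close>

definition periodic_extension :: "real \<Rightarrow> (real \<Rightarrow> real) \<Rightarrow> real \<Rightarrow> real" where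
  "periodic_extension K W x = W (x - 2 * K * of_int \<lceil>(x - K) / (2 * K)\<rceil>)"

lemma periodic_extension_measurable:
  assumes "W \<in> borel_measurable borel"
  shows "periodic_extension K W \<in> borel_measurable borel"
  unfolding periodic_extension_def[abs_def] using assms by measurable

lemma periodic_extension_periodic:
  assumes "0 < K"
  shows "periodic_fun (ereal K) (periodic_extension K W)"
proof -
  have "(x + 2 * K - K) / (2 * K) = (x - K) / (2 * K) + 1" for x
    using assms by (simp add: field_simps)
  then have "\<lceil>(x + 2 * K - K) / (2 * K)\<rceil> = \<lceil>(x - K) / (2 * K)\<rceil> + 1" for x
    by simp
  then show ?thesis
    by (simp add: periodic_fun_def periodic_extension_def algebra_simps)
qed

lemma periodic_extension_eq:
  assumes "0 < K" and "x \<in> {-K<..K}"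
  shows "periodic_extension K W x = W x"
proof -
  have "\<lceil>(x - K) / (2 * K)\<rceil> = 0"
    using assms by (intro ceiling_unique) (auto simp: field_simps)
  then show ?thesis
    by (simp add: periodic_extension_def)
qed

lemma periodic_extension_eq_near:
  assumes "0 < K" and vanish: "\<And>x. K - 1/2 \<le> \<bar>x\<bar> \<Longrightarrow> W x = 0" and "\<bar>x\<bar> \<le> K + 1/2"
  shows "periodic_extension K W x = W x"
proof (cases "K \<le> 1/2")
  case True
  then show ?thesis
    using vanish by (simp add: periodic_extension_def)
next
  case False
  consider "x \<in> {-K<..K}" | "K < x" | "x \<le> -K"
    by fastforce
  then show ?thesis
  proof cases
    case 1
    show ?thesis
      using assms(1) 1 by (rule periodic_extension_eq)
  next
    case 2
    have "\<lceil>(x - K) / (2 * K)\<rceil> = 1"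
      using 2 assms(3) False by (intro ceiling_unique) (auto simp: field_simps)
    then show ?thesis
      using 2 assms(3) by (simp add: periodic_extension_def vanish)
  next
    case 3
    have "\<lceil>(x - K) / (2 * K)\<rceil> = -1"
      using 3 assms(3) False by (intro ceiling_unique) (auto simp: field_simps)
    then show ?thesis
      using 3 assms(3) by (simp add: periodic_extension_def vanish)
  qed
qed

lemma ell_le_L_fun_if_vanishes:
  assumes W: "W \<in> M_set p q s \<infinity>" and "0 < K" and vanish: "\<And>x. K - 1/2 \<le> \<bar>x\<bar> \<Longrightarrow> W x = 0"
  shows "ell p q s (ereal K) \<le> ereal (L_fun p q s \<infinity> W)"
proof -
  define V where "V = periodic_extension K W"
  have W_meas: "W \<in> borel_measurable borel"
    using W by (simp add: M_set_def X_space_def in_Lr_def)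
  have V_meas: "V \<in> borel_measurable borel" "avg V \<in> borel_measurable borel"
    unfolding V_def using W_meas by (simp_all add: periodic_extension_measurable avg_measurable)
  have W_out: "W x = 0" if "x \<notin> {-K<..K}" for x
    using that by (intro vanish) auto
  have V_in: "V x = W x" if "x \<in> {-K<..K}" for x
    unfolding V_def using assms(2) that by (rule periodic_extension_eq)
  have avg_out: "avg W \<phi> = 0" if "\<phi> \<notin> {-K<..K}" for \<phi>
    using that by (intro avg_eq_0 vanish) auto
  have avg_in: "avg V \<phi> = avg W \<phi>" if "\<phi> \<in> {-K<..K}" for \<phi>
    unfolding V_def using that
    by (intro avg_cong periodic_extension_eq_near[OF assms(2) vanish]) auto
  have norms: "Lr_pow 2 (I_set (ereal K)) V = Lr_pow 2 (I_set \<infinity>) W"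
    "Lr_pow r (I_set (ereal K)) (avg V) = Lr_pow r (I_set \<infinity>) (avg W)" for r
    unfolding I_set_simps using V_in W_out avg_in avg_out by (auto intro!: Lr_pow_eq_Lr_pow_UNIV)
  have "in_Lr 2 UNIV W" "in_Lr q UNIV (avg W)" "in_Lr p UNIV (avg W)"
    using W by (simp_all add: M_set_def X_space_def)
  moreover have "periodic_fun (ereal K) V"
    unfolding V_def using assms(2) by (rule periodic_extension_periodic)
  ultimately have "V \<in> X_space p q (ereal K)"
    unfolding X_space_def using V_meas V_in W_out avg_in avg_out
    by (auto intro: in_Lr_if_in_Lr_UNIV)
  then have "V \<in> M_set p q s (ereal K)"
    using W norms by (simp add: M_set_def F_fun_def Q_fun_def P_fun_def)
  then have "ell p q s (ereal K) \<le> ereal (L_fun p q s (ereal K) V)"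
    unfolding ell_def by (rule INF_lower)
  also have "L_fun p q s (ereal K) V = L_fun p q s \<infinity> W"
    using norms by (simp add: L_fun_def Q_fun_def P_fun_def)
  finally show ?thesis .
qed

section \<open>Truncation\<close>

definition cutoff :: "nat \<Rightarrow> (real \<Rightarrow> real) \<Rightarrow> real \<Rightarrow> real" where
  "cutoff n W x = (if \<bar>x\<bar> \<le> real n then W x else 0)"

lemma cutoff_measurable:
  assumes "W \<in> borel_measurable borel"
  shows "cutoff n W \<in> borel_measurable borel"
  unfolding cutoff_def[abs_def] using assms by measurable

lemma eventually_le_real_sequentially: "\<forall>\<^sub>F n in sequentially. c \<le> real n"
  using filterlim_real_sequentially by (simp add: filterlim_at_top)

lemma tendsto_integral_if_abs_le:
  fixes h :: "real \<Rightarrow> real"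
  assumes "integrable lborel h"
  shows "(\<lambda>n. \<integral>x. (if \<bar>x\<bar> \<le> real n - c then h x else 0) \<partial>lborel) \<longlonglongrightarrow> (\<integral>x. h x \<partial>lborel)"
proof -
  let ?h = "\<lambda>n x. if \<bar>x\<bar> \<le> real n - c then h x else 0"
  have meas: "?h n \<in> borel_measurable lborel" for n
    using borel_measurable_integrable[OF assms] by measurable
  have lim: "AE x in lborel. (\<lambda>n. ?h n x) \<longlonglongrightarrow> h x"
  proof (rule AE_I2)
    fix x
    show "(\<lambda>n. ?h n x) \<longlonglongrightarrow> h x"
      by (intro tendsto_eventually eventually_mono[OF eventually_le_real_sequentially[of "\<bar>x\<bar> + c"]])
         auto
  qed
  have bound: "AE x in lborel. norm (?h n x) \<le> \<bar>h x\<bar>" for n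
    by auto
  show ?thesis
    using integral_dominated_convergence[OF _ meas integrable_abs[OF assms] lim bound]
      borel_measurable_integrable[OF assms] by simp
qed

lemma integrable_cutoff_powr:
  assumes "W \<in> borel_measurable borel" and "integrable lborel (\<lambda>x. \<bar>W x\<bar> powr r)"
  shows "integrable lborel (\<lambda>x. \<bar>cutoff n W x\<bar> powr r)"
  using assms(1)
  by (intro Bochner_Integration.integrable_bound[OF assms(2)]) (auto simp: cutoff_def)

lemma tendsto_integral_cutoff_powr:
  assumes "integrable lborel (\<lambda>x. \<bar>W x\<bar> powr r)"
  shows "(\<lambda>n. \<integral>x. \<bar>cutoff n W x\<bar> powr r \<partial>lborel) \<longlonglongrightarrow> (\<integral>x. \<bar>W x\<bar> powr r \<partial>lborel)"
proof -
  have "(\<lambda>x. \<bar>cutoff n W x\<bar> powr r) = (\<lambda>x. if \<bar>x\<bar> \<le> real n - 0 then \<bar>W x\<bar> powr r else 0)" for n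
    by (simp add: cutoff_def fun_eq_iff)
  then show ?thesis
    using tendsto_integral_if_abs_le[OF assms] by presburger
qed

definition tail_L2 :: "(real \<Rightarrow> real) \<Rightarrow> real \<Rightarrow> real" where
  "tail_L2 W R = (\<integral>x. (if R \<le> \<bar>x\<bar> then (W x)\<^sup>2 else 0) \<partial>lborel)"

lemma tail_L2_nonneg: "0 \<le> tail_L2 W R"
  unfolding tail_L2_def by (rule integral_nonneg_AE) auto

lemma tendsto_tail_L2:
  assumes "integrable lborel (\<lambda>x. (W x)\<^sup>2)"
  shows "(\<lambda>n. tail_L2 W (real n - c)) \<longlonglongrightarrow> 0"
proof -
  let ?tail = "\<lambda>n x. if real n - c \<le> \<bar>x\<bar> then (W x)\<^sup>2 else 0"
  have meas: "?tail n \<in> borel_measurable lborel" for n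
    using borel_measurable_integrable[OF assms] by measurable
  have lim: "AE x in lborel. (\<lambda>n. ?tail n x) \<longlonglongrightarrow> 0"
  proof (rule AE_I2)
    fix x
    show "(\<lambda>n. ?tail n x) \<longlonglongrightarrow> 0"
      by (intro tendsto_eventually eventually_mono[OF eventually_le_real_sequentially[of "\<bar>x\<bar> + c + 1"]])
         auto
  qed
  have bound: "AE x in lborel. norm (?tail n x) \<le> (W x)\<^sup>2" for n
    by auto
  show ?thesis
    unfolding tail_L2_def
    using integral_dominated_convergence[where f = "\<lambda>_. 0", OF _ meas assms lim bound] by simp
qed

lemma avg_cutoff_eq:
  "\<bar>\<phi>\<bar> \<le> real n - 1/2 \<Longrightarrow> avg (cutoff n W) \<phi> = avg W \<phi>"
  by (rule avg_cong) (auto simp: cutoff_def)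

lemma avg_cutoff_eq_0:
  "real n + 1/2 < \<bar>\<phi>\<bar> \<Longrightarrow> avg (cutoff n W) \<phi> = 0"
  by (rule avg_eq_0) (auto simp: cutoff_def)

lemma abs_avg_cutoff_le:
  assumes "W \<in> borel_measurable borel" and "integrable lborel (\<lambda>x. (W x)\<^sup>2)"
    and "real n - 1/2 \<le> \<bar>\<phi>\<bar>"
  shows "\<bar>avg (cutoff n W) \<phi>\<bar> \<le> sqrt (tail_L2 W (real n - 1))"
  unfolding tail_L2_def
proof (rule abs_avg_le_sqrt[OF cutoff_measurable[OF assms(1)]])
  show "integrable lborel (\<lambda>x. if real n - 1 \<le> \<bar>x\<bar> then (W x)\<^sup>2 else 0)"
    using assms(1) by (intro Bochner_Integration.integrable_bound[OF assms(2)]) auto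
qed (use assms(3) in \<open>auto simp: cutoff_def\<close>)

lemma
  fixes W :: "real \<Rightarrow> real" and r :: real and n :: nat
  assumes W: "W \<in> borel_measurable borel" "integrable lborel (\<lambda>x. (W x)\<^sup>2)" and "0 < r"
  defines "band \<phi> \<equiv>
    (if real n - 1/2 < \<bar>\<phi>\<bar> \<and> \<bar>\<phi>\<bar> \<le> real n + 1/2 then \<bar>avg (cutoff n W) \<phi>\<bar> powr r else 0)"
  shows integrable_avg_cutoff_band: "integrable lborel band"
    and integral_avg_cutoff_band_le:
      "(\<integral>\<phi>. band \<phi> \<partial>lborel) \<le> 2 * sqrt (tail_L2 W (real n - 1)) powr r"
proof -
  define C where "C = sqrt (tail_L2 W (real n - 1)) powr r"
  define H where "H \<phi> = C *
      (indicator {real n - 1/2<..real n + 1/2} \<phi> + indicator {-real n - 1/2..<-real n + 1/2} \<phi>)"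
    for \<phi> :: real
  have "0 \<le> C"
    by (simp add: C_def)
  have H: "integrable lborel H" "(\<integral>\<phi>. H \<phi> \<partial>lborel) = 2 * C"
    unfolding H_def by (auto intro!: integrable_real_indicator)
  have band_le: "norm (band \<phi>) \<le> H \<phi>" for \<phi>
  proof (cases "real n - 1/2 < \<bar>\<phi>\<bar> \<and> \<bar>\<phi>\<bar> \<le> real n + 1/2")
    case True
    then have "\<bar>avg (cutoff n W) \<phi>\<bar> powr r \<le> C"
      unfolding C_def using abs_avg_cutoff_le[OF W] \<open>0 < r\<close> by (intro powr_mono2) auto
    moreover have "1 \<le> indicator {real n - 1/2<..real n + 1/2} \<phi> +
        (indicator {-real n - 1/2..<-real n + 1/2} \<phi> :: real)"
      using True by (auto simp: indicator_def)
    ultimately show ?thesis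
      using True \<open>0 \<le> C\<close> mult_left_mono[of 1 _ C] unfolding band_def H_def
      by (smt (verit) mult_cancel_left1 norm_ge_zero real_norm_def abs_of_nonneg powr_ge_zero)
  next
    case False
    then show ?thesis
      unfolding band_def H_def using \<open>0 \<le> C\<close> by (auto intro!: mult_nonneg_nonneg add_nonneg_nonneg)
  qed
  have "band \<in> borel_measurable lborel"
    unfolding band_def using avg_measurable[OF cutoff_measurable[OF W(1)]] by measurable
  then show band: "integrable lborel band"
    using band_le by (intro Bochner_Integration.integrable_bound[OF H(1)]) (auto intro: order_trans[OF _ abs_ge_self])
  have "(\<integral>\<phi>. band \<phi> \<partial>lborel) \<le> (\<integral>\<phi>. H \<phi> \<partial>lborel)"
    using band H(1) band_le by (intro Bochner_Integration.integral_mono) (auto intro: order_trans[OF abs_ge_self])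
  then show "(\<integral>\<phi>. band \<phi> \<partial>lborel) \<le> 2 * sqrt (tail_L2 W (real n - 1)) powr r"
    using H(2) by (simp add: C_def)
qed

text \<open>The average of the cut-off agrees with that of W on [-(n - 1/2), n - 1/2], vanishes
  outside [-(n + 1/2), n + 1/2], and on the two bands in between it is controlled by the
  L2 tail of W.\<close>

lemma
  fixes W :: "real \<Rightarrow> real"
  assumes W: "W \<in> borel_measurable borel" "integrable lborel (\<lambda>x. (W x)\<^sup>2)"
    and "0 < r" and avg_W: "integrable lborel (\<lambda>x. \<bar>avg W x\<bar> powr r)"
  shows integrable_avg_cutoff_powr: "integrable lborel (\<lambda>x. \<bar>avg (cutoff n W) x\<bar> powr r)"
    and tendsto_integral_avg_cutoff_powr:
      "(\<lambda>n. \<integral>x. \<bar>avg (cutoff n W) x\<bar> powr r \<partial>lborel) \<longlonglongrightarrow> (\<integral>x. \<bar>avg W x\<bar> powr r \<partial>lborel)"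
proof -
  define inner where "inner n \<phi> = (if \<bar>\<phi>\<bar> \<le> real n - 1/2 then \<bar>avg W \<phi>\<bar> powr r else 0)"
    for n :: nat and \<phi>
  define band where "band n \<phi> = (if real n - 1/2 < \<bar>\<phi>\<bar> \<and> \<bar>\<phi>\<bar> \<le> real n + 1/2
      then \<bar>avg (cutoff n W) \<phi>\<bar> powr r else 0)" for n :: nat and \<phi>
  have split: "(\<lambda>\<phi>. \<bar>avg (cutoff n W) \<phi>\<bar> powr r) = (\<lambda>\<phi>. inner n \<phi> + band n \<phi>)" for n
    using avg_cutoff_eq[of _ n W] avg_cutoff_eq_0[of n _ W] by (force simp: inner_def band_def)
  have "inner n \<in> borel_measurable lborel" for n
    unfolding inner_def using avg_measurable[OF W(1)] by measurable
  then have inner: "integrable lborel (inner n)" for n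
    by (intro Bochner_Integration.integrable_bound[OF avg_W]) (auto simp: inner_def)
  have band: "integrable lborel (band n)" for n
    unfolding band_def using W \<open>0 < r\<close> by (rule integrable_avg_cutoff_band)
  show "integrable lborel (\<lambda>x. \<bar>avg (cutoff n W) x\<bar> powr r)"
    unfolding split using inner band by simp
  have "(\<lambda>n. \<integral>\<phi>. inner n \<phi> \<partial>lborel) \<longlonglongrightarrow> (\<integral>\<phi>. \<bar>avg W \<phi>\<bar> powr r \<partial>lborel)"
    unfolding inner_def using avg_W by (rule tendsto_integral_if_abs_le)
  moreover have "(\<lambda>n. \<integral>\<phi>. band n \<phi> \<partial>lborel) \<longlonglongrightarrow> 0"
  proof (rule real_tendsto_sandwich[of "\<lambda>_. 0" _ _ "\<lambda>n. 2 * sqrt (tail_L2 W (real n - 1)) powr r"])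
    show "\<forall>\<^sub>F n in sequentially. 0 \<le> (\<integral>\<phi>. band n \<phi> \<partial>lborel)"
      by (simp add: band_def)
    show "\<forall>\<^sub>F n in sequentially. (\<integral>\<phi>. band n \<phi> \<partial>lborel) \<le> 2 * sqrt (tail_L2 W (real n - 1)) powr r"
      unfolding band_def using W \<open>0 < r\<close> by (intro always_eventually allI integral_avg_cutoff_band_le)
    have "(\<lambda>n. sqrt (tail_L2 W (real n - 1)) powr r) \<longlonglongrightarrow> 0"
      using tendsto_tail_L2[OF W(2)] \<open>0 < r\<close> tail_L2_nonneg
      by (intro tendsto_zero_powrI) (auto intro: tendsto_real_sqrt[where x = 0, simplified])
    then show "(\<lambda>n. 2 * sqrt (tail_L2 W (real n - 1)) powr r) \<longlonglongrightarrow> 0"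
      by (rule tendsto_mult_right_zero)
  qed auto
  ultimately show
    "(\<lambda>n. \<integral>x. \<bar>avg (cutoff n W) x\<bar> powr r \<partial>lborel) \<longlonglongrightarrow> (\<integral>x. \<bar>avg W x\<bar> powr r \<partial>lborel)"
    unfolding split using inner band by (simp add: tendsto_add[where b = 0, simplified])
qed

lemma cutoff_in_X_space:
  assumes "0 < q" "0 < p" and W: "W \<in> X_space p q \<infinity>"
  shows "cutoff n W \<in> X_space p q \<infinity>"
proof -
  have meas: "W \<in> borel_measurable borel" and L2: "integrable lborel (\<lambda>x. (W x)\<^sup>2)"
    and "integrable lborel (\<lambda>x. \<bar>avg W x\<bar> powr q)" "integrable lborel (\<lambda>x. \<bar>avg W x\<bar> powr p)"
    using W by (simp_all add: X_space_def in_Lr_UNIV)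
  then show ?thesis
    using assms(1,2) integrable_cutoff_powr[OF meas, of 2] integrable_avg_cutoff_powr[OF meas L2]
      cutoff_measurable[OF meas] avg_measurable[OF cutoff_measurable[OF meas]]
    by (simp add: X_space_def in_Lr_UNIV periodic_fun_def)
qed

lemma tendsto_cutoff:
  assumes "0 < q" "0 < p" and W: "W \<in> X_space p q \<infinity>"
  shows "(\<lambda>n. Lr_pow 2 UNIV (cutoff n W)) \<longlonglongrightarrow> Lr_pow 2 UNIV W"
    and "(\<lambda>n. Q_fun q \<infinity> (cutoff n W)) \<longlonglongrightarrow> Q_fun q \<infinity> W"
    and "(\<lambda>n. P_fun p \<infinity> (cutoff n W)) \<longlonglongrightarrow> P_fun p \<infinity> W"
proof -
  have meas: "W \<in> borel_measurable borel" and L2: "integrable lborel (\<lambda>x. (W x)\<^sup>2)"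
    and "integrable lborel (\<lambda>x. \<bar>avg W x\<bar> powr q)" "integrable lborel (\<lambda>x. \<bar>avg W x\<bar> powr p)"
    using W by (simp_all add: X_space_def in_Lr_UNIV)
  then show "(\<lambda>n. Lr_pow 2 UNIV (cutoff n W)) \<longlonglongrightarrow> Lr_pow 2 UNIV W"
    "(\<lambda>n. Q_fun q \<infinity> (cutoff n W)) \<longlonglongrightarrow> Q_fun q \<infinity> W"
    "(\<lambda>n. P_fun p \<infinity> (cutoff n W)) \<longlonglongrightarrow> P_fun p \<infinity> W"
    using assms(1,2) tendsto_integral_cutoff_powr[of W 2] tendsto_integral_avg_cutoff_powr[OF meas L2]
    by (simp_all add: Lr_pow_UNIV Q_fun_def P_fun_def)
qed

lemma M_set_compact_support_approx:
  assumes "2 < p" "0 < q" "q < p" "0 < s" and W: "W \<in> M_set p q s \<infinity>" and "0 < e"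
  shows "\<exists>W' R. W' \<in> M_set p q s \<infinity> \<and> (\<forall>x. R < \<bar>x\<bar> \<longrightarrow> W' x = 0) \<and>
           L_fun p q s \<infinity> W' < L_fun p q s \<infinity> W + e"
proof -
  have X: "W \<in> X_space p q \<infinity>" and N: "Lr_pow 2 UNIV W \<noteq> 0" and F: "F_fun p q s \<infinity> W = 0"
    using W by (simp_all add: M_set_def)
  define a where "a n = s * Lr_pow 2 UNIV (cutoff n W)" for n
  define b where "b n = Q_fun q \<infinity> (cutoff n W)" for n
  define c where "c n = P_fun p \<infinity> (cutoff n W)" for n
  have "0 < s * Lr_pow 2 UNIV W"
    using N Lr_pow_nonneg[of 2 UNIV W] assms(4) by simp
  have lim: "a \<longlonglongrightarrow> s * Lr_pow 2 UNIV W" "b \<longlonglongrightarrow> Q_fun q \<infinity> W" "c \<longlonglongrightarrow> P_fun p \<infinity> W"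
    unfolding a_def b_def c_def using tendsto_cutoff[OF _ _ X] assms(1,2) by (auto intro: tendsto_mult)
  have "fibre_nehari p q (s * Lr_pow 2 UNIV W) (Q_fun q \<infinity> W) (P_fun p \<infinity> W) 1 = 0"
    using F F_fun_cmult[of 1 p q s \<infinity> W] by simp
  from eventually_fibre_nehari_root[OF _ _ _ \<open>0 < s * Lr_pow 2 UNIV W\<close> _ this lim]
  have "\<forall>\<^sub>F n in sequentially. \<exists>t>0. fibre_nehari p q (a n) (b n) (c n) t = 0 \<and>
      fibre_energy p q (a n) (b n) (c n) t < L_fun p q s \<infinity> W + e"
    using L_fun_cmult[of 1 p q s \<infinity> W] assms
    by (simp add: a_def b_def c_def Q_fun_def P_fun_def Lr_pow_nonneg)
  moreover have "\<forall>\<^sub>F n in sequentially. 0 < a n"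
    using lim(1) \<open>0 < s * Lr_pow 2 UNIV W\<close> by (rule order_tendstoD(1))
  ultimately have "\<forall>\<^sub>F n in sequentially. 0 < a n \<and> (\<exists>t>0. fibre_nehari p q (a n) (b n) (c n) t = 0 \<and>
      fibre_energy p q (a n) (b n) (c n) t < L_fun p q s \<infinity> W + e)"
    by (simp add: eventually_conj_iff)
  then obtain n t where "0 < a n" "0 < t" and nehari: "fibre_nehari p q (a n) (b n) (c n) t = 0"
    and energy: "fibre_energy p q (a n) (b n) (c n) t < L_fun p q s \<infinity> W + e"
    by (auto simp: eventually_sequentially)
  have "(\<lambda>x. t * cutoff n W x) \<in> M_set p q s \<infinity>"
    using cutoff_in_X_space[OF _ _ X] assms(1,2) \<open>0 < t\<close> \<open>0 < a n\<close> nehari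
    by (intro cmult_in_M_set) (auto simp: a_def b_def c_def)
  moreover have "L_fun p q s \<infinity> (\<lambda>x. t * cutoff n W x) < L_fun p q s \<infinity> W + e"
    using \<open>0 < t\<close> energy by (simp add: L_fun_cmult a_def b_def c_def)
  moreover have "\<forall>x. real n < \<bar>x\<bar> \<longrightarrow> t * cutoff n W x = 0"
    by (simp add: cutoff_def)
  ultimately show ?thesis
    by blast
qed

theorem lemma11:
  fixes p q sig2 :: real
  assumes "p > 2" and "1 < q" and "q < p" and "sig2 > 0"
  shows "Limsup at_top (\<lambda>K::real. ell p q sig2 (ereal K)) \<le> ell p q sig2 \<infinity>"
  unfolding ell_def[of p q sig2 \<infinity>]
proof (rule INF_greatest)
  fix W assume W: "W \<in> M_set p q sig2 \<infinity>"
  show "Limsup at_top (\<lambda>K. ell p q sig2 (ereal K)) \<le> ereal (L_fun p q sig2 \<infinity> W)"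
  proof (rule ereal_le_epsilon2)
    fix e :: real assume "0 < e"
    then obtain W' R where W': "W' \<in> M_set p q sig2 \<infinity>" "\<forall>x. R < \<bar>x\<bar> \<longrightarrow> W' x = 0"
      and energy: "L_fun p q sig2 \<infinity> W' < L_fun p q sig2 \<infinity> W + e"
      using M_set_compact_support_approx[OF assms(1) _ assms(3,4) W] assms(2) by force
    have "ell p q sig2 (ereal K) \<le> ereal (L_fun p q sig2 \<infinity> W) + ereal e" if "\<bar>R\<bar> + 1 < K" for K
    proof -
      have "ell p q sig2 (ereal K) \<le> ereal (L_fun p q sig2 \<infinity> W')"
        using W' that by (intro ell_le_L_fun_if_vanishes) auto
      also have "\<dots> \<le> ereal (L_fun p q sig2 \<infinity> W) + ereal e"
        using energy by simp
      finally show ?thesis .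
    qed
    then show "Limsup at_top (\<lambda>K. ell p q sig2 (ereal K)) \<le> ereal (L_fun p q sig2 \<infinity> W) + ereal e"
      by (intro Limsup_bounded eventually_mono[OF eventually_gt_at_top[of "\<bar>R\<bar> + 1"]])
  qed
qed

end
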